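(* In every run of the algorithm described in the context in which at most $t$ processes crash, for all correct processes $p_i,p_j$: if $w\_sync_i[i]=x$ at some time, then there is a finite time after which $w\_sync_i[j]\ge x$.
   Context: Model. There are $n$ asynchronous processes $p_1,\dots,p_n$, of which up to $t<n/2$ may crash; a process runs its algorithm correctly until it crashes, and a process that never crashes is correct. Each ordered pair of processes is linked by a reliable (no loss, corruption, duplication or creation; every message sent to a correct process is eventually received), asynchronous, not necessarily FIFO channel. $p_w$ is the single writer, invoking writes sequentially; $v_0$ is the initial value. Messages: $\textsc{write}(b,v)$ with $b\in\{0,1\}$, which stands for the two types $\textsc{write0}(v)$ and $\textsc{write1}(v)$; $\textsc{read}()$; $\textsc{proceed}()$. Variables of $p_i$. These are: $history_i$ with $history_i[0]=v_0$; $w\_sync_i[1..n]$, initially all $0$; $r\_sync_i[1..n]$, initially all $0$. $\mathsf{write}(v)$ by $p_w$: $wsn\gets w\_sync_w[w]+1$; $w\_sync_w[w]\gets wsn$; $history_w[wsn]\gets v$. Send $\textsc{write}(wsn\bmod 2,v)$ to each $p_j$ with $w\_sync_w[j]=wsn-1$. Wait until at least $n-t$ indices $j$ have $w\_sync_w[j]=wsn$. Return. $\mathsf{read}()$ by $p_i$: $r\_sync_i[i]\gets r\_sync_i[i]+1$ and call the new value $rsn$. Send $\textsc{read}()$ to all $p_j$ with $j\ne i$. Wait until at least $n-t$ indices $j$ have $r\_sync_i[j]=rsn$. Let $sn\gets w\_sync_i[i]$. Wait until at least $n-t$ indices $j$ have $w\_sync_i[j]\ge sn$. Return $history_i[sn]$.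 On receipt of $\textsc{write}(b,v)$ from $p_j$ at $p_i$: Wait until $b=(w\_sync_i[j]+1)\bmod 2$. Let $wsn\gets w\_sync_i[j]+1$. If $wsn=w\_sync_i[i]+1$, then set $w\_sync_i[i]\gets wsn$ and $history_i[wsn]\gets v$, and send $\textsc{write}(wsn\bmod 2,v)$ to each $p_\ell$ with $w\_sync_i[\ell]=wsn-1$. Else, if $wsn<w\_sync_i[i]$, send $\textsc{write}((wsn+1)\bmod 2,history_i[wsn+1])$ to $p_j$. Finally set $w\_sync_i[j]\gets wsn$. On receipt of $\textsc{read}()$ from $p_j$ at $p_i$: Let $sn\gets w\_sync_i[i]$; wait until $w\_sync_i[j]\ge sn$; send $\textsc{proceed}()$ to $p_j$. On receipt of $\textsc{proceed}()$ from $p_j$ at $p_i$: $r\_sync_i[j]\gets r\_sync_i[j]+1$. Message handlers run concurrently; a waiting handler does not block the reception of other messages. *)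

theory Defs
  imports Main
begin

datatype 'v msg = MWrite nat 'v | MRead | MProceed
  \<comment> \<open>MWrite b v stands for WRITE(b,v); b is always 0 or 1\<close>

datatype 'v task = TWrite nat 'v | TRead nat
  \<comment> \<open>waiting handlers: WRITE(b,v) handler; READ handler with the captured sn\<close>

datatype opstate = Idle | WWait nat | RWait1 nat | RWait2 nat

record 'v lstate =
  hist :: "nat \<Rightarrow> 'v"
  ws :: "nat \<Rightarrow> nat"
  rs :: "nat \<Rightarrow> nat"
  opst :: opstate
  pend :: "(nat \<times> nat \<times> 'v task) set"   \<comment> \<open>(message id, sender, task)\<close>
  crashed :: bool

text \<open>Messages in transit: (send time, sender, destination, message).\<close>
type_synonym 'v netmsg = "nat \<times> nat \<times> nat \<times> 'v msg"

record 'v cfg =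
  lst :: "nat \<Rightarrow> 'v lstate"
  net :: "'v netmsg set"

datatype 'v act =
    AInvW 'v
  | AInvR
  | ARd2                  \<comment> \<open>read: end of first wait, sn := w_sync[i]\<close>
  | ARetW
  | ARetR
  | ARecv nat nat "'v msg" \<comment> \<open>receipt of message (id, sender, msg)\<close>
  | AExec nat nat "'v task" \<comment> \<open>a waiting handler (id, sender, task) completes\<close>

datatype 'v event =
    Do nat "'v act"
  | Crash nat
  | CrashDo nat "'v act" "(nat \<times> 'v msg) set"
      \<comment> \<open>process performs the action but crashes while sending: only the given subset is sent\<close>
  | Stutter

definition init_lstate :: "'v \<Rightarrow> 'v lstate" where
  "init_lstate v0 = \<lparr>hist = (\<lambda>_. v0), ws = (\<lambda>_. 0), rs = (\<lambda>_. 0), opst = Idle,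
                     pend = {}, crashed = False\<rparr>"

definition init_cfg :: "'v \<Rightarrow> 'v cfg" where
  "init_cfg v0 = \<lparr>lst = (\<lambda>_. init_lstate v0), net = {}\<rparr>"

text \<open>Atomic execution of the WRITE(b,v) handler of p_i for a message from p_j,
  after its wait condition holds (s0 is the state with the task already removed).\<close>
definition write_exec :: "nat \<Rightarrow> nat \<Rightarrow> nat \<Rightarrow> 'v \<Rightarrow> 'v lstate \<Rightarrow> 'v lstate \<times> (nat \<times> 'v msg) set" where
  "write_exec n i j v s0 =
     (let wsn = ws s0 j + 1 in
      if wsn = ws s0 i + 1 then
        (let s1 = s0\<lparr>ws := (ws s0)(i := wsn), hist := (hist s0)(wsn := v)\<rparr> in
         (s1\<lparr>ws := (ws s1)(j := wsn)\<rparr>,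
          {(l, MWrite (wsn mod 2) v) | l. l \<in> {1..n} \<and> ws s1 l = wsn - 1}))
      else if wsn < ws s0 i then
        (s0\<lparr>ws := (ws s0)(j := wsn)\<rparr>, {(j, MWrite ((wsn + 1) mod 2) (hist s0 (wsn + 1)))})
      else (s0\<lparr>ws := (ws s0)(j := wsn)\<rparr>, {}))"

text \<open>Local effect of an action of process i: new local state and messages to send
  (destination, message); None if the action is not enabled.\<close>
fun lact :: "nat \<Rightarrow> nat \<Rightarrow> nat \<Rightarrow> nat \<Rightarrow> 'v act \<Rightarrow> 'v lstate
             \<Rightarrow> ('v lstate \<times> (nat \<times> 'v msg) set) option" where
  "lact n t w i (AInvW v) s =
     (if i = w \<and> opst s = Idle then
        (let wsn = ws s i + 1;
             s1 = s\<lparr>ws := (ws s)(i := wsn), hist := (hist s)(wsn := v)\<rparr> in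
         Some (s1\<lparr>opst := WWait wsn\<rparr>,
               {(j, MWrite (wsn mod 2) v) | j. j \<in> {1..n} \<and> ws s1 j = wsn - 1}))
      else None)"
| "lact n t w i AInvR s =
     (if opst s = Idle then
        (let rsn = rs s i + 1 in
         Some (s\<lparr>rs := (rs s)(i := rsn), opst := RWait1 rsn\<rparr>,
               {(j, MRead) | j. j \<in> {1..n} \<and> j \<noteq> i}))
      else None)"
| "lact n t w i ARd2 s =
     (case opst s of
        RWait1 rsn \<Rightarrow> (if card {j \<in> {1..n}. rs s j = rsn} \<ge> n - t
                       then Some (s\<lparr>opst := RWait2 (ws s i)\<rparr>, {}) else None)
      | _ \<Rightarrow> None)"
| "lact n t w i ARetW s =
     (case opst s of
        WWait wsn \<Rightarrow> (if card {j \<in> {1..n}. ws s j = wsn} \<ge> n - t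
                      then Some (s\<lparr>opst := Idle\<rparr>, {}) else None)
      | _ \<Rightarrow> None)"
| "lact n t w i ARetR s =
     (case opst s of
        RWait2 sn \<Rightarrow> (if card {j \<in> {1..n}. ws s j \<ge> sn} \<ge> n - t
                      then Some (s\<lparr>opst := Idle\<rparr>, {}) else None)
      | _ \<Rightarrow> None)"
| "lact n t w i (ARecv k j m) s =
     (case m of
        MWrite b v \<Rightarrow> Some (s\<lparr>pend := insert (k, j, TWrite b v) (pend s)\<rparr>, {})
      | MRead \<Rightarrow> Some (s\<lparr>pend := insert (k, j, TRead (ws s i)) (pend s)\<rparr>, {})
      | MProceed \<Rightarrow> Some (s\<lparr>rs := (rs s)(j := rs s j + 1)\<rparr>, {}))"
| "lact n t w i (AExec k j tk) s =
     (if (k, j, tk) \<in> pend s then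
        (let s0 = s\<lparr>pend := pend s - {(k, j, tk)}\<rparr> in
         case tk of
           TWrite b v \<Rightarrow> (if b = (ws s j + 1) mod 2 then Some (write_exec n i j v s0) else None)
         | TRead sn \<Rightarrow> (if ws s j \<ge> sn then Some (s0, {(j, MProceed)}) else None))
      else None)"

definition recv_ok :: "'v cfg \<Rightarrow> nat \<Rightarrow> 'v act \<Rightarrow> bool" where
  "recv_ok c i a = (case a of ARecv k j m \<Rightarrow> (k, j, i, m) \<in> net c | _ \<Rightarrow> True)"

definition consumed :: "nat \<Rightarrow> 'v act \<Rightarrow> 'v netmsg set" where
  "consumed i a = (case a of ARecv k j m \<Rightarrow> {(k, j, i, m)} | _ \<Rightarrow> {})"

definition is_inv :: "'v act \<Rightarrow> bool" where
  "is_inv a = (case a of AInvW _ \<Rightarrow> True | AInvR \<Rightarrow> True | _ \<Rightarrow> False)"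

definition enabled :: "nat \<Rightarrow> nat \<Rightarrow> nat \<Rightarrow> 'v cfg \<Rightarrow> nat \<Rightarrow> 'v act \<Rightarrow> bool" where
  "enabled n t w c i a = (i \<in> {1..n} \<and> \<not> crashed (lst c i) \<and> recv_ok c i a
                          \<and> lact n t w i a (lst c i) \<noteq> None)"

text \<open>One step at time k (message ids are the send time k).\<close>
definition step :: "nat \<Rightarrow> nat \<Rightarrow> nat \<Rightarrow> nat \<Rightarrow> 'v cfg \<Rightarrow> 'v event \<Rightarrow> 'v cfg \<Rightarrow> bool" where
  "step n t w k c e c' =
     (case e of
        Stutter \<Rightarrow> c' = c
      | Do i a \<Rightarrow> enabled n t w c i a \<and>
          (\<exists>s' outs. lact n t w i a (lst c i) = Some (s', outs) \<and>
             c' = \<lparr>lst = (lst c)(i := s'),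
                   net = (net c - consumed i a) \<union> {(k, i, d, m) | d m. (d, m) \<in> outs}\<rparr>)
      | Crash i \<Rightarrow> i \<in> {1..n} \<and> \<not> crashed (lst c i) \<and>
          c' = c\<lparr>lst := (lst c)(i := (lst c i)\<lparr>crashed := True\<rparr>)\<rparr>
      | CrashDo i a S \<Rightarrow> enabled n t w c i a \<and>
          (\<exists>s' outs. lact n t w i a (lst c i) = Some (s', outs) \<and> S \<subseteq> outs \<and>
             c' = \<lparr>lst = (lst c)(i := s'\<lparr>crashed := True\<rparr>),
                   net = (net c - consumed i a) \<union> {(k, i, d, m) | d m. (d, m) \<in> S}\<rparr>))"

text \<open>Weak fairness for every locally controlled action (everything except invocations):
  an action cannot stay enabled forever. For receipt actions this is exactly the
  reliability of channels towards non-crashed processes.\<close>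
definition fair :: "nat \<Rightarrow> nat \<Rightarrow> nat \<Rightarrow> (nat \<Rightarrow> 'v cfg) \<Rightarrow> bool" where
  "fair n t w r = (\<forall>i a k0. \<not> is_inv a \<longrightarrow> \<not> (\<forall>k\<ge>k0. enabled n t w (r k) i a))"

definition is_run :: "nat \<Rightarrow> nat \<Rightarrow> nat \<Rightarrow> 'v \<Rightarrow> (nat \<Rightarrow> 'v cfg) \<Rightarrow> (nat \<Rightarrow> 'v event) \<Rightarrow> bool" where
  "is_run n t w v0 r ev = (r 0 = init_cfg v0 \<and> (\<forall>k. step n t w k (r k) (ev k) (r (Suc k)))
                            \<and> fair n t w r)"

definition correct :: "(nat \<Rightarrow> 'v cfg) \<Rightarrow> nat \<Rightarrow> bool" where
  "correct r i = (\<forall>k. \<not> crashed (lst (r k) i))"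

end

theory Submission
  imports Defs
begin

text \<open>Fix correct processes i \<noteq> j and look at the WRITE traffic from one of them, s, to the
other, d. Since s forwards sequence number m to d only after recording d at m - 1, it has sent
min(w_sync_s[s], w_sync_s[d] + 1) messages, of which d has applied w_sync_d[s]. Comparing with
the reverse direction shows that at most two of them are outstanding, so their alternating bits
tell them apart and the wait of the WRITE handler is eventually satisfied by the next one;
by fairness, once w_sync_d[s] stops growing, everything sent has been applied.
If w_sync_i[j] stayed below x = w_sync_i[i] forever, both w_sync_i[j] = a and w_sync_j[i] = b
would stabilise; then i has sent a + 1 = b messages to j and j has sent a messages to i, forcing
w_sync_j[j] = a < b = w_sync_j[i], although a process never records another one ahead of itself.\<close>

text \<open>The WRITE traffic from one process to another. Messages are identified by triples
(message id, alternating bit, value); a message sent in step k gets id k.\<close>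

record 'v channel =
  transit :: "(nat \<times> nat \<times> 'v) set"
  waiting :: "(nat \<times> nat \<times> 'v) set"
  delivered :: nat
  sent :: nat

abbreviation msg_bit :: "nat \<times> nat \<times> 'v \<Rightarrow> nat" where
  "msg_bit x \<equiv> fst (snd x)"

inductive chan_trans :: "nat \<Rightarrow> 'v channel \<Rightarrow> 'v channel \<Rightarrow> bool" for k where
  idle: "transit ch' = transit ch \<Longrightarrow> waiting ch' = waiting ch \<Longrightarrow>
    delivered ch' = delivered ch \<Longrightarrow> sent ch' = sent ch \<Longrightarrow> chan_trans k ch ch'"
| send: "transit ch' = insert (k, (sent ch + 1) mod 2, v) (transit ch) \<Longrightarrow>
    waiting ch' = waiting ch \<Longrightarrow> delivered ch' = delivered ch \<Longrightarrow> sent ch' = sent ch + 1 \<Longrightarrow>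
    chan_trans k ch ch'"
| receive: "x \<in> transit ch \<Longrightarrow> transit ch' = transit ch - {x} \<Longrightarrow>
    waiting ch' = insert x (waiting ch) \<Longrightarrow> delivered ch' = delivered ch \<Longrightarrow> sent ch' = sent ch \<Longrightarrow>
    chan_trans k ch ch'"
| deliver: "x \<in> waiting ch \<Longrightarrow> msg_bit x = (delivered ch + 1) mod 2 \<Longrightarrow>
    transit ch' = transit ch \<Longrightarrow> waiting ch' = waiting ch - {x} \<Longrightarrow>
    delivered ch' = delivered ch + 1 \<Longrightarrow> sent ch' = sent ch \<Longrightarrow> chan_trans k ch ch'"

abbreviation outstanding :: "'v channel \<Rightarrow> (nat \<times> nat \<times> 'v) set" where
  "outstanding ch \<equiv> transit ch \<union> waiting ch"

text \<open>The outstanding messages carry exactly the sequence numbers delivered + 1, ..., sent;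
there are at most two of them, so each is identified by its bit.\<close>

definition chan_inv :: "'v channel \<Rightarrow> bool" where
  "chan_inv ch \<longleftrightarrow>
     delivered ch \<le> sent ch \<and> sent ch \<le> delivered ch + 2 \<and> transit ch \<inter> waiting ch = {} \<and>
     inj_on msg_bit (outstanding ch) \<and>
     msg_bit ` outstanding ch = (\<lambda>m. m mod 2) ` {delivered ch<..sent ch}"

lemma chan_inv_next_outstanding:
  assumes "chan_inv ch" "delivered ch < sent ch"
  obtains x where "x \<in> outstanding ch" "msg_bit x = (delivered ch + 1) mod 2"
proof -
  have "(delivered ch + 1) mod 2 \<in> msg_bit ` outstanding ch"
    using assms by (auto simp: chan_inv_def)
  then show ?thesis using that by (metis (no_types, lifting) imageE)
qed

lemma chan_trans_delivered_le_sent: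
  assumes "chan_trans k ch ch'" "chan_inv ch"
  shows "delivered ch' \<le> sent ch'"
  using assms
proof cases
  case (deliver x)
  then have "msg_bit x \<in> (\<lambda>m. m mod 2) ` {delivered ch<..sent ch}"
    using \<open>chan_inv ch\<close> unfolding chan_inv_def by blast
  then show ?thesis using deliver by auto
qed (auto simp: chan_inv_def)

lemma chan_inv_chan_trans:
  assumes "chan_trans k ch ch'" "chan_inv ch" "sent ch' \<le> delivered ch' + 2"
  shows "chan_inv ch'"
  using assms(1)
proof cases
  case idle
  then show ?thesis using assms(2) by (simp add: chan_inv_def)
next
  case (send v)
  let ?R = "delivered ch" and ?sn = "sent ch"
  have "?sn \<le> ?R + 1" using assms(3) send by simp
  then have "{?R<..?sn} \<subseteq> {?sn}" by auto
  then have bits: "msg_bit ` outstanding ch \<subseteq> {?sn mod 2}"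
    using assms(2) unfolding chan_inv_def by auto
  have "(?sn + 1) mod 2 \<noteq> ?sn mod 2" by presburger
  then have new: "(?sn + 1) mod 2 \<notin> msg_bit ` outstanding ch"
    using bits by blast
  then have "(k, (?sn + 1) mod 2, v) \<notin> outstanding ch" by force
  moreover have "outstanding ch' = insert (k, (?sn + 1) mod 2, v) (outstanding ch)"
    using send by auto
  moreover have "{?R<..?sn + 1} = insert (?sn + 1) {?R<..?sn}"
    using assms(2) by (auto simp: chan_inv_def)
  ultimately show ?thesis using assms(2,3) send new
    by (auto simp: chan_inv_def image_iff)
next
  case (receive x)
  then have "outstanding ch' = outstanding ch" by auto
  then show ?thesis using assms(2) receive by (auto simp: chan_inv_def)
next
  case (deliver x)
  let ?R = "delivered ch" and ?sn = "sent ch"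
  have inv: "chan_inv ch" by fact
  have "x \<notin> transit ch" using inv deliver by (auto simp: chan_inv_def)
  then have out': "outstanding ch' = outstanding ch - {x}" using deliver by auto
  have inj: "inj_on msg_bit (outstanding ch)" using inv by (simp add: chan_inv_def)
  have "msg_bit x \<in> (\<lambda>m. m mod 2) ` {?R<..?sn}"
    using inv deliver unfolding chan_inv_def by blast
  then have "?sn = ?R + 1 \<or> ?sn = ?R + 2" using inv by (auto simp: chan_inv_def)
  moreover have "{?R<..?R + 1} = {?R + 1}" "{?R<..?R + 2} = {?R + 1, ?R + 2}"
    "{?R + 1<..?R + 2} = {?R + 2}"
    by auto
  moreover have "(?R + 2) mod 2 \<noteq> (?R + 1) mod 2" by presburger
  ultimately have
    "(\<lambda>m. m mod 2) ` {?R + 1<..?sn} = (\<lambda>m. m mod 2) ` {?R<..?sn} - {(?R + 1) mod 2}"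
    by auto
  moreover have "msg_bit ` (outstanding ch - {x}) = msg_bit ` outstanding ch - {msg_bit x}"
    using inj deliver by (simp add: inj_on_image_set_diff)
  ultimately show ?thesis using inv deliver out' assms(3)
    by (auto simp: chan_inv_def inj_on_diff)
qed

lemma lact_exec_write_SomeD:
  assumes "lact n t w p (AExec k j (TWrite b v)) st = Some (st', outs)"
  shows "(k, j, TWrite b v) \<in> pend st" "b = (ws st j + 1) mod 2"
    "pend st' = pend st - {(k, j, TWrite b v)}"
    "ws st' = (if ws st j = ws st p then (ws st)(p := ws st j + 1, j := ws st j + 1)
               else (ws st)(j := ws st j + 1))"
    "outs = (if ws st j = ws st p
             then {(l, MWrite ((ws st j + 1) mod 2) v) | l.
                     l \<in> {1..n} \<and> ((ws st)(p := ws st j + 1)) l = ws st j}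
             else if ws st j + 1 < ws st p
             then {(j, MWrite ((ws st j + 2) mod 2) (hist st (ws st j + 2)))}
             else {})"
  using assms by (auto simp: write_exec_def Let_def split: if_splits)

lemma lact_exec_read_SomeD:
  assumes "lact n t w p (AExec k j (TRead sn)) st = Some (st', outs)"
  shows "(k, j, TRead sn) \<in> pend st" "st' = st\<lparr>pend := pend st - {(k, j, TRead sn)}\<rparr>"
    "outs = {(j, MProceed)}"
  using assms by (auto simp: Let_def split: if_splits)

lemma lact_ws_le_own:
  assumes "lact n t w p a st = Some (st', outs)" "\<forall>q. ws st q \<le> ws st p"
  shows "ws st' q \<le> ws st' p"
proof (cases a)
  case (AExec k j tk)
  show ?thesis
  proof (cases tk)
    case (TWrite b v)
    have "ws st j \<le> ws st p" "ws st q \<le> ws st p" using assms(2) by blast+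
    then show ?thesis
      using lact_exec_write_SomeD[OF assms(1)[unfolded AExec TWrite]]
      by (auto simp: le_Suc_eq)
  next
    case (TRead sn)
    then show ?thesis
      using lact_exec_read_SomeD[OF assms(1)[unfolded AExec TRead]] assms(2) by auto
  qed
qed (use assms in \<open>auto simp: Let_def le_Suc_eq split: if_splits opstate.splits msg.splits\<close>)

lemma lact_ws_mono:
  assumes "lact n t w p a st = Some (st', outs)" "\<forall>q. ws st q \<le> ws st p"
  shows "ws st q \<le> ws st' q"
proof (cases a)
  case (AExec k j tk)
  show ?thesis
  proof (cases tk)
    case (TWrite b v)
    then show ?thesis using lact_exec_write_SomeD[OF assms(1)[unfolded AExec TWrite]] assms(2)
      by auto
  next
    case (TRead sn)
    then show ?thesis using lact_exec_read_SomeD[OF assms(1)[unfolded AExec TRead]] by auto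
  qed
qed (use assms in \<open>auto simp: Let_def split: if_splits opstate.splits msg.splits\<close>)

definition pending_writes :: "'v lstate \<Rightarrow> nat \<Rightarrow> (nat \<times> nat \<times> 'v) set" where
  "pending_writes st s = {(k, b, v). (k, s, TWrite b v) \<in> pend st}"

definition write_outs :: "(nat \<times> 'v msg) set \<Rightarrow> nat \<Rightarrow> (nat \<times> 'v) set" where
  "write_outs outs d = {(b, v). (d, MWrite b v) \<in> outs}"

definition sent_to :: "'v lstate \<Rightarrow> nat \<Rightarrow> nat \<Rightarrow> nat" where
  "sent_to st s d = min (ws st s) (ws st d + 1)"

lemma lact_sent_to:
  assumes act: "lact n t w s a st = Some (st', outs)" and "d \<noteq> s" "d \<in> {1..n}"
    and le_own: "\<forall>q. ws st q \<le> ws st s"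
  shows "sent_to st' s d = sent_to st s d \<and> write_outs outs d = {} \<or>
         sent_to st' s d = sent_to st s d + 1 \<and>
         (\<exists>v. write_outs outs d = {((sent_to st s d + 1) mod 2, v)})"
proof (cases a)
  case (AInvW v)
  have "ws st d \<le> ws st s" using le_own by blast
  then consider "ws st d = ws st s" | "ws st d < ws st s" by linarith
  then show ?thesis using act \<open>d \<noteq> s\<close> \<open>d \<in> {1..n}\<close> AInvW
    by cases (auto simp: Let_def sent_to_def write_outs_def split: if_splits)
next
  case (AExec k j tk)
  show ?thesis
  proof (cases tk)
    case (TWrite b v)
    note exec = lact_exec_write_SomeD[OF act[unfolded AExec TWrite]]
    have "ws st d \<le> ws st s" "ws st j \<le> ws st s" using le_own by blast+
    then show ?thesis using exec \<open>d \<noteq> s\<close> \<open>d \<in> {1..n}\<close>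
      by (cases "j = d"; cases "j = s"; cases "ws st d = ws st s"; cases "ws st j = ws st s")
         (auto simp: sent_to_def write_outs_def)
  next
    case (TRead sn)
    then show ?thesis using lact_exec_read_SomeD[OF act[unfolded AExec TRead]]
      by (auto simp: sent_to_def write_outs_def)
  qed
qed (use assms in
     \<open>auto simp: Let_def sent_to_def write_outs_def split: if_splits opstate.splits msg.splits\<close>)

lemma lact_receiver_cases:
  assumes act: "lact n t w d a st = Some (st', outs)" and "s \<noteq> d"
  obtains (receive) k0 b v where "a = ARecv k0 s (MWrite b v)" "ws st' s = ws st s"
      "pending_writes st' s = insert (k0, b, v) (pending_writes st s)"
  | (deliver) k0 b v where "a = AExec k0 s (TWrite b v)" "(k0, b, v) \<in> pending_writes st s"
      "b = (ws st s + 1) mod 2" "ws st' s = ws st s + 1"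
      "pending_writes st' s = pending_writes st s - {(k0, b, v)}"
  | (other) "\<forall>k0 b v. a \<noteq> ARecv k0 s (MWrite b v)" "ws st' s = ws st s"
      "pending_writes st' s = pending_writes st s"
proof (cases a)
  case (AExec k0 j tk)
  show ?thesis
  proof (cases tk)
    case (TWrite b v)
    note exec = lact_exec_write_SomeD[OF act[unfolded AExec TWrite]]
    show ?thesis
    proof (cases "j = s")
      case True
      show ?thesis
        by (rule deliver[of k0 b v])
           (use True exec AExec TWrite \<open>s \<noteq> d\<close> in \<open>auto simp: pending_writes_def\<close>)
    next
      case False
      show ?thesis
        by (rule other) (use False exec AExec TWrite \<open>s \<noteq> d\<close> in \<open>auto simp: pending_writes_def\<close>)
    qed
  next
    case (TRead sn)
    then show ?thesis using other lact_exec_read_SomeD[OF act[unfolded AExec TRead]] AExec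
      by (auto simp: pending_writes_def)
  qed
next
  case (ARecv k0 j m)
  show ?thesis
  proof (cases "j = s \<and> (\<exists>b v. m = MWrite b v)")
    case True
    then obtain b v where "m = MWrite b v" by blast
    then show ?thesis
      by (intro receive[of k0 b v]) (use act ARecv True in \<open>auto simp: pending_writes_def\<close>)
  next
    case False
    then show ?thesis
      by (intro other) (use act ARecv in \<open>auto simp: pending_writes_def split: msg.splits\<close>)
  qed
qed (use act \<open>s \<noteq> d\<close> in
     \<open>auto intro!: other simp: Let_def pending_writes_def split: if_splits opstate.splits\<close>)

definition in_transit :: "'v cfg \<Rightarrow> nat \<Rightarrow> nat \<Rightarrow> (nat \<times> nat \<times> 'v) set" where
  "in_transit c s d = {(k, b, v). (k, s, d, MWrite b v) \<in> net c}"

definition chan :: "'v cfg \<Rightarrow> nat \<Rightarrow> nat \<Rightarrow> 'v channel" where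
  "chan c s d = \<lparr>transit = in_transit c s d,
                 waiting = pending_writes (lst c d) s,
                 delivered = ws (lst c d) s,
                 sent = sent_to (lst c s) s d\<rparr>"

lemma in_transit_after_action:
  "in_transit \<lparr>lst = L, net = (net c - consumed p a) \<union> {(k, p, d', m) |d' m. (d', m) \<in> S}\<rparr>
     s d =
     {(k', b, v) \<in> in_transit c s d. (k', s, d, MWrite b v) \<notin> consumed p a} \<union>
     (if p = s then {(k, b, v) |b v. (b, v) \<in> write_outs S d} else {})"
  by (auto simp: in_transit_def write_outs_def)

lemma in_transit_after_action_elsewhere:
  assumes "d \<noteq> p"
  shows "in_transit \<lparr>lst = L, net = (net c - consumed p a) \<union> {(k, p, d', m) |d' m. (d', m) \<in> S}\<rparr>
           s d = in_transit c s d \<union> (if p = s then {(k, b, v) |b v. (b, v) \<in> write_outs S d} else {})"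
  using assms unfolding in_transit_after_action by (auto simp: consumed_def split: act.splits)

lemma chan_simps [simp]:
  "transit (chan c s d) = in_transit c s d" "waiting (chan c s d) = pending_writes (lst c d) s"
  "delivered (chan c s d) = ws (lst c d) s" "sent (chan c s d) = sent_to (lst c s) s d"
  by (simp_all add: chan_def)

lemma chan_trans_action_elsewhere:
  assumes "p \<noteq> s" "p \<noteq> d"
  shows "chan_trans k (chan c s d)
           (chan \<lparr>lst = (lst c)(p := st'),
                  net = (net c - consumed p a) \<union> {(k', p, d', m) |d' m. (d', m) \<in> S}\<rparr> s d)"
  using assms by (intro chan_trans.idle) (simp_all add: in_transit_after_action_elsewhere)

lemma chan_trans_sender_action:
  assumes act: "lact n t w s a (lst c s) = Some (st', outs)" and "d \<noteq> s" "d \<in> {1..n}"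
    and "\<forall>q. ws (lst c s) q \<le> ws (lst c s) s"
  shows "chan_trans k (chan c s d)
           (chan \<lparr>lst = (lst c)(s := st'),
                  net = (net c - consumed s a) \<union> {(k, s, d', m) |d' m. (d', m) \<in> outs}\<rparr> s d)"
    (is "chan_trans k ?ch ?ch'")
proof -
  have transit': "transit ?ch' = transit ?ch \<union> {(k, b, v) |b v. (b, v) \<in> write_outs outs d}"
    using \<open>d \<noteq> s\<close> by (simp add: in_transit_after_action_elsewhere)
  have same: "waiting ?ch' = waiting ?ch" "delivered ?ch' = delivered ?ch"
    using \<open>d \<noteq> s\<close> by simp_all
  from lact_sent_to[OF act assms(2-4)] show ?thesis
  proof (elim disjE conjE exE)
    assume "sent_to st' s d = sent_to (lst c s) s d" "write_outs outs d = {}"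
    then show ?thesis using transit' same by (intro chan_trans.idle) simp_all
  next
    fix v
    assume "sent_to st' s d = sent_to (lst c s) s d + 1"
      "write_outs outs d = {((sent_to (lst c s) s d + 1) mod 2, v)}"
    then show ?thesis using transit' same by (intro chan_trans.send[of _ k _ v]) auto
  qed
qed

lemma chan_trans_receiver_action:
  assumes act: "lact n t w d a (lst c d) = Some (st', outs)" and recv: "recv_ok c d a"
    and "s \<noteq> d"
  shows "chan_trans k (chan c s d)
           (chan \<lparr>lst = (lst c)(d := st'),
                  net = (net c - consumed d a) \<union> {(k, d, d', m) |d' m. (d', m) \<in> outs}\<rparr> s d)"
    (is "chan_trans k ?ch ?ch'")
proof -
  have transit':
    "transit ?ch' = {(k', b, v) \<in> transit ?ch. (k', s, d, MWrite b v) \<notin> consumed d a}"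
    using \<open>s \<noteq> d\<close> by (simp add: in_transit_after_action)
  have other':
    "waiting ?ch' = pending_writes st' s" "delivered ?ch' = ws st' s" "sent ?ch' = sent ?ch"
    using \<open>s \<noteq> d\<close> by simp_all
  from act \<open>s \<noteq> d\<close> show ?thesis
  proof (cases rule: lact_receiver_cases)
    case (receive k0 b v)
    have "(k0, b, v) \<in> transit ?ch" using receive recv by (simp add: recv_ok_def in_transit_def)
    moreover have "transit ?ch' = transit ?ch - {(k0, b, v)}"
      unfolding transit' using receive by (auto simp: consumed_def)
    ultimately show ?thesis using receive other' by (intro chan_trans.receive) simp_all
  next
    case (deliver k0 b v)
    have "transit ?ch' = transit ?ch"
      unfolding transit' using deliver by (simp add: consumed_def)
    then show ?thesis using deliver other' by (intro chan_trans.deliver[of "(k0, b, v)"]) simp_all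
  next
    case other
    then have "transit ?ch' = transit ?ch"
      unfolding transit' by (auto simp: consumed_def split: act.splits)
    then show ?thesis using other other' by (intro chan_trans.idle) simp_all
  qed
qed

lemma step_ws_cases:
  assumes "step n t w k c e c'"
  obtains (unchanged) "\<And>p. ws (lst c' p) = ws (lst c p)"
  | (action) p a st' outs where "lact n t w p a (lst c p) = Some (st', outs)"
      "ws (lst c' p) = ws st'" "\<And>q. q \<noteq> p \<Longrightarrow> ws (lst c' q) = ws (lst c q)"
  using assms by (cases e) (auto simp: step_def intro: unchanged action)

lemma step_ws_le_own:
  assumes "step n t w k c e c'" "\<forall>p q. ws (lst c p) q \<le> ws (lst c p) p"
  shows "ws (lst c' p) q \<le> ws (lst c' p) p"
  using assms(1)
proof (cases rule: step_ws_cases)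
  case (action p' a st' outs)
  then show ?thesis
    using lact_ws_le_own[OF action(1)] assms(2) by (cases "p = p'") auto
qed (use assms(2) in simp)

lemma step_ws_mono:
  assumes "step n t w k c e c'" "\<forall>p q. ws (lst c p) q \<le> ws (lst c p) p"
  shows "ws (lst c p) q \<le> ws (lst c' p) q"
  using assms(1)
proof (cases rule: step_ws_cases)
  case (action p' a st' outs)
  then show ?thesis
    using lact_ws_mono[OF action(1)] assms(2) by (cases "p = p'") auto
qed simp

lemma run_ws_le_own:
  assumes "is_run n t w v0 r ev"
  shows "ws (lst (r m) p) q \<le> ws (lst (r m) p) p"
proof -
  have "\<forall>p q. ws (lst (r m) p) q \<le> ws (lst (r m) p) p"
  proof (induction m)
    case 0
    then show ?case using assms by (simp add: is_run_def init_cfg_def init_lstate_def)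
  next
    case (Suc m)
    then show ?case using assms step_ws_le_own by (metis is_run_def)
  qed
  then show ?thesis by blast
qed

lemma run_ws_mono:
  assumes "is_run n t w v0 r ev" "m \<le> m'"
  shows "ws (lst (r m) p) q \<le> ws (lst (r m') p) q"
proof (rule lift_Suc_mono_le[of "\<lambda>m. ws (lst (r m) p) q", OF _ assms(2)])
  fix m
  show "ws (lst (r m) p) q \<le> ws (lst (r (Suc m)) p) q"
    using assms(1) step_ws_mono run_ws_le_own[OF assms(1)] by (metis is_run_def)
qed

lemma step_chan_trans:
  assumes st: "step n t w k c e c'" and "s \<noteq> d" "s \<in> {1..n}" "d \<in> {1..n}"
    and alive: "\<not> crashed (lst c' s)" "\<not> crashed (lst c' d)"
    and le_own: "\<forall>q. ws (lst c s) q \<le> ws (lst c s) s"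
  shows "chan_trans k (chan c s d) (chan c' s d)"
proof (cases e)
  case Stutter
  then show ?thesis using st by (intro chan_trans.idle) (simp_all add: step_def)
next
  case (Crash p)
  then have "p \<noteq> s" "p \<noteq> d"
    and c': "c' = c\<lparr>lst := (lst c)(p := (lst c p)\<lparr>crashed := True\<rparr>)\<rparr>"
    using st alive by (auto simp: step_def)
  then show ?thesis by (intro chan_trans.idle) (simp_all add: in_transit_def)
next
  case (CrashDo p a S)
  then have "\<exists>st' outs. lact n t w p a (lst c p) = Some (st', outs) \<and> S \<subseteq> outs \<and>
               c' = \<lparr>lst = (lst c)(p := st'\<lparr>crashed := True\<rparr>),
                     net = (net c - consumed p a) \<union> {(k, p, d', m) |d' m. (d', m) \<in> S}\<rparr>"
    using st by (simp add: step_def)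
  then obtain st' where
    c': "c' = \<lparr>lst = (lst c)(p := st'\<lparr>crashed := True\<rparr>),
                net = (net c - consumed p a) \<union> {(k, p, d', m) |d' m. (d', m) \<in> S}\<rparr>"
    by blast
  have "p \<noteq> s" "p \<noteq> d" using alive unfolding c' by auto
  then show ?thesis unfolding c' by (rule chan_trans_action_elsewhere)
next
  case (Do p a)
  then have "enabled n t w c p a"
    and "\<exists>st' outs. lact n t w p a (lst c p) = Some (st', outs) \<and>
           c' = \<lparr>lst = (lst c)(p := st'),
                 net = (net c - consumed p a) \<union> {(k, p, d', m) |d' m. (d', m) \<in> outs}\<rparr>"
    using st by (simp_all add: step_def)
  then obtain st' outs where recv: "recv_ok c p a"
    and act: "lact n t w p a (lst c p) = Some (st', outs)"
    and c': "c' = \<lparr>lst = (lst c)(p := st'),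
                   net = (net c - consumed p a) \<union> {(k, p, d', m) |d' m. (d', m) \<in> outs}\<rparr>"
    unfolding enabled_def by blast
  consider "p = s" | "p = d" | "p \<noteq> s" "p \<noteq> d" by blast
  then show ?thesis
  proof cases
    case 1
    have "d \<noteq> s" using \<open>s \<noteq> d\<close> by simp
    from chan_trans_sender_action[OF act[unfolded 1] this \<open>d \<in> {1..n}\<close> le_own]
    show ?thesis unfolding c' 1 .
  next
    case 2
    from chan_trans_receiver_action[OF act[unfolded 2] recv[unfolded 2] \<open>s \<noteq> d\<close>]
    show ?thesis unfolding c' 2 .
  next
    case 3
    then show ?thesis unfolding c' by (rule chan_trans_action_elsewhere)
  qed
qed

lemma run_chan_trans:
  assumes run: "is_run n t w v0 r ev" and "s \<noteq> d" "s \<in> {1..n}" "d \<in> {1..n}"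
    and "correct r s" "correct r d"
  shows "chan_trans m (chan (r m) s d) (chan (r (Suc m)) s d)"
  using assms run_ws_le_own[OF run]
  by (intro step_chan_trans[of n t w m _ "ev m"]) (auto simp: is_run_def correct_def)

lemma chan_sent_le_delivered_add_2:
  assumes "delivered (chan c d s) \<le> sent (chan c d s)"
  shows "sent (chan c s d) \<le> delivered (chan c s d) + 2"
  using assms by (simp add: sent_to_def min_def split: if_splits)

lemma run_chan_inv:
  assumes run: "is_run n t w v0 r ev" and "i \<noteq> j" "i \<in> {1..n}" "j \<in> {1..n}"
    and "correct r i" "correct r j"
  shows "chan_inv (chan (r m) i j) \<and> chan_inv (chan (r m) j i)"
proof (induction m)
  case 0
  then show ?case using run
    by (auto simp: is_run_def init_cfg_def init_lstate_def chan_inv_def in_transit_def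
        pending_writes_def sent_to_def inj_on_def)
next
  case (Suc m)
  have ij: "chan_trans m (chan (r m) i j) (chan (r (Suc m)) i j)"
    and ji: "chan_trans m (chan (r m) j i) (chan (r (Suc m)) j i)"
    using run_chan_trans assms by (metis, metis)
  have "delivered (chan (r (Suc m)) i j) \<le> sent (chan (r (Suc m)) i j)"
    "delivered (chan (r (Suc m)) j i) \<le> sent (chan (r (Suc m)) j i)"
    using chan_trans_delivered_le_sent ij ji Suc.IH by blast+
  then show ?case
    using chan_inv_chan_trans[OF ij] chan_inv_chan_trans[OF ji] Suc.IH chan_sent_le_delivered_add_2
    by blast
qed

lemma chan_trans_keeps_outstanding:
  assumes "chan_trans k ch ch'" "delivered ch' = delivered ch" "x \<in> outstanding ch"
  shows "x \<in> outstanding ch'"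
  using assms by (cases rule: chan_trans.cases) auto

lemma chan_trans_keeps_waiting:
  assumes "chan_trans k ch ch'" "delivered ch' = delivered ch" "x \<in> waiting ch"
  shows "x \<in> waiting ch'"
  using assms by (cases rule: chan_trans.cases) auto

lemma fair_not_always_in_transit:
  assumes "fair n t w r" "d \<in> {1..n}" "correct r d"
  shows "\<exists>m\<ge>K. x \<notin> transit (chan (r m) s d)"
proof (rule ccontr)
  obtain k b v where x: "x = (k, b, v)" by (cases x)
  assume "\<not> ?thesis"
  then have "\<forall>m\<ge>K. enabled n t w (r m) d (ARecv k s (MWrite b v))"
    using assms(2,3) x by (auto simp: enabled_def recv_ok_def correct_def in_transit_def)
  moreover have "\<not> is_inv (ARecv k s (MWrite b v))" by (simp add: is_inv_def)
  ultimately show False using assms(1) unfolding fair_def by blast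
qed

lemma fair_not_always_waiting:
  assumes "fair n t w r" "d \<in> {1..n}" "correct r d"
    and "\<forall>m\<ge>K. delivered (chan (r m) s d) = a" "msg_bit x = (a + 1) mod 2"
  shows "\<exists>m\<ge>K. x \<notin> waiting (chan (r m) s d)"
proof (rule ccontr)
  obtain k b v where x: "x = (k, b, v)" by (cases x)
  assume "\<not> ?thesis"
  then have "\<forall>m\<ge>K. enabled n t w (r m) d (AExec k s (TWrite b v))"
    using assms(2-5) x
    by (auto simp: enabled_def recv_ok_def correct_def pending_writes_def Let_def)
  moreover have "\<not> is_inv (AExec k s (TWrite b v))" by (simp add: is_inv_def)
  ultimately show False using assms(1) unfolding fair_def by blast
qed

lemma sent_eq_stable_delivered:
  assumes fair: "fair n t w r" and "d \<in> {1..n}" "correct r d"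
    and trans: "\<And>m. chan_trans m (chan (r m) s d) (chan (r (Suc m)) s d)"
    and inv: "\<And>m. chan_inv (chan (r m) s d)"
    and stable: "\<forall>m\<ge>K. delivered (chan (r m) s d) = a" and "K \<le> k"
  shows "sent (chan (r k) s d) = a"
proof (rule ccontr)
  let ?ch = "\<lambda>m. chan (r m) s d"
  assume "sent (?ch k) \<noteq> a"
  then have "delivered (?ch k) < sent (?ch k)"
    using inv[of k] stable \<open>K \<le> k\<close> by (auto simp: chan_inv_def simp del: chan_simps)
  then obtain x where x: "x \<in> outstanding (?ch k)" "msg_bit x = (a + 1) mod 2"
    using chan_inv_next_outstanding inv stable \<open>K \<le> k\<close> by metis
  have still: "delivered (?ch (Suc m)) = delivered (?ch m)" if "K \<le> m" for m
    using stable that by (simp del: chan_simps)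
  have "x \<in> outstanding (?ch m)" if "k \<le> m" for m
    using that
  proof (induction m rule: dec_induct)
    case (step m)
    then show ?case using chan_trans_keeps_outstanding[OF trans] still \<open>K \<le> k\<close> by simp
  qed (use x in simp)
  moreover obtain m1 where "k \<le> m1" "x \<notin> transit (?ch m1)"
    using fair_not_always_in_transit[OF fair \<open>d \<in> {1..n}\<close> \<open>correct r d\<close>, of k x s] by blast
  ultimately have "x \<in> waiting (?ch m1)" by blast
  have "x \<in> waiting (?ch m)" if "m1 \<le> m" for m
    using that
  proof (induction m rule: dec_induct)
    case (step m)
    then show ?case
      using chan_trans_keeps_waiting[OF trans] still \<open>K \<le> k\<close> \<open>k \<le> m1\<close> by simp
  qed (use \<open>x \<in> waiting (?ch m1)\<close> in simp)
  moreover have "\<forall>m\<ge>m1. delivered (?ch m) = a" using stable \<open>K \<le> k\<close> \<open>k \<le> m1\<close> by simp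
  ultimately show False
    using fair_not_always_waiting[OF fair \<open>d \<in> {1..n}\<close> \<open>correct r d\<close> _ x(2)] by blast
qed

lemma mono_bounded_nat_eventually_const:
  fixes f :: "nat \<Rightarrow> nat"
  assumes "mono f" "\<And>k. f k \<le> B"
  obtains K a where "\<forall>k\<ge>K. f k = a"
proof -
  have fin: "finite (range f)"
    using assms(2) by (meson finite_atMost finite_subset image_subsetI atMost_iff)
  obtain K where K: "f K = Max (range f)" using Max_in[OF fin] by auto
  have "\<forall>k\<ge>K. f k = Max (range f)"
    using K fin assms(1) by (metis Max_ge antisym monoD rangeI)
  then show ?thesis using that by blast
qed

lemma run_ws_eventually_const:
  assumes "is_run n t w v0 r ev" "\<And>m. ws (lst (r m) p) q \<le> B"
  obtains K a where "\<forall>m\<ge>K. ws (lst (r m) p) q = a"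
  using mono_bounded_nat_eventually_const[of "\<lambda>m. ws (lst (r m) p) q" B] run_ws_mono[OF assms(1)]
    assms(2) by (metis monoI)

lemma run_ws_catches_up:
  assumes run: "is_run n t w v0 r ev" and "i \<noteq> j" and i: "i \<in> {1..n}" and j: "j \<in> {1..n}"
    and "correct r i" "correct r j"
  shows "\<exists>K. ws (lst (r k) i) i \<le> ws (lst (r K) i) j"
proof (rule ccontr)
  define x where "x = ws (lst (r k) i) i"
  assume "\<not> ?thesis"
  then have below: "ws (lst (r m) i) j < x" for m by (simp add: x_def not_le)
  have fair: "fair n t w r" using run by (simp add: is_run_def)
  have inv: "chan_inv (chan (r m) i j)" "chan_inv (chan (r m) j i)" for m
    using run_chan_inv[OF run \<open>i \<noteq> j\<close> i j] assms(5,6) by auto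
  have trans: "chan_trans m (chan (r m) i j) (chan (r (Suc m)) i j)"
    "chan_trans m (chan (r m) j i) (chan (r (Suc m)) j i)" for m
    using run_chan_trans[OF run] assms by (metis, metis)
  obtain K1 a where a: "\<forall>m\<ge>K1. ws (lst (r m) i) j = a"
    using run_ws_eventually_const[OF run, of i j x] below by (metis less_imp_le)
  have "ws (lst (r m) j) i \<le> x" for m
  proof -
    have "ws (lst (r m) j) i \<le> sent (chan (r m) i j)"
      using inv(1)[of m] by (simp add: chan_inv_def)
    also have "\<dots> \<le> ws (lst (r m) i) j + 1" by (simp add: sent_to_def)
    finally show ?thesis using below[of m] by simp
  qed
  then obtain K2 b where b: "\<forall>m\<ge>K2. ws (lst (r m) j) i = b"
    using run_ws_eventually_const[OF run] by metis
  define K where "K = max k (max K1 K2)"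
  have "sent (chan (r K) j i) = a"
    using sent_eq_stable_delivered[OF fair i \<open>correct r i\<close> trans(2) inv(2), of K1 a K] a
    by (simp add: K_def)
  moreover have "sent (chan (r K) i j) = b"
    using sent_eq_stable_delivered[OF fair j \<open>correct r j\<close> trans(1) inv(1), of K2 b K] b
    by (simp add: K_def)
  moreover have "a < x" "x \<le> ws (lst (r K) i) i" "ws (lst (r K) i) j = a" "ws (lst (r K) j) i = b"
    using below[of K] a b run_ws_mono[OF run, of k K i i] by (auto simp: K_def x_def)
  moreover have "ws (lst (r K) j) i \<le> ws (lst (r K) j) j" using run_ws_le_own[OF run] .
  ultimately show False by (simp add: sent_to_def)
qed

theorem lemma6:
  fixes n t w :: nat and v0 :: 'v and r :: "nat \<Rightarrow> 'v cfg" and ev :: "nat \<Rightarrow> 'v event"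
  assumes "2 * t < n"
    and "w \<in> {1..n}"
    and "is_run n t w v0 r ev"
    and "card {p \<in> {1..n}. \<not> correct r p} \<le> t"
    and "i \<in> {1..n}" and "j \<in> {1..n}"
    and "correct r i" and "correct r j"
    and "ws (lst (r k) i) i = x"
  shows "\<exists>k'. \<forall>k''\<ge>k'. ws (lst (r k'') i) j \<ge> x"
proof -
  obtain K where "x \<le> ws (lst (r K) i) j"
  proof (cases "i = j")
    case True
    then show ?thesis using that assms(9) by blast
  next
    case False
    then show ?thesis using that run_ws_catches_up[OF assms(3) False assms(5-8)] assms(9) by blast
  qed
  then show ?thesis using run_ws_mono[OF assms(3)] order_trans by blast
qed

end
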